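(* Let $n\ge3$, $\rho\in[0,1]$ and $\alpha\in[0,\tfrac{\pi}{2}]$. Then $$\int_{-1}^1 \frac{x^2(1-x^2)^{\frac{n-3}{2}}}{(1+\rho^2-2\rho x \cos\alpha)^{\frac{n}{2}-1}}\, {}_2 F_1\Big(\tfrac{n-2}{4}, \tfrac{n}{4};\tfrac{n-1}{2}; \tfrac{4\rho^2 \sin^2\alpha\, (1-x^2)}{(1+\rho^2-2\rho x\cos\alpha)^2}\Big)\, dx = \frac{\sin^2\alpha }{n-1}\int_{-1}^{1} (1-x^2)^{\frac{n-1}{2}} (1-2\rho x + \rho^2)^{1-\frac{n}{2}}\, dx + \cos^2\alpha \int_{-1}^1 x^2(1-x^2)^{\frac{n-3}{2}} (1-2\rho x + \rho^2)^{1-\frac{n}{2}}\, dx.$$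
   Context: ${}_2F_1$ is the Gauss hypergeometric function. *)

theory Defs
  imports "HOL-Analysis.Analysis"
begin

definition hyp2F1 :: "real \<Rightarrow> real \<Rightarrow> real \<Rightarrow> real \<Rightarrow> real" where
  "hyp2F1 a b c z =
     (\<Sum>k. pochhammer a k * pochhammer b k / (pochhammer c k * fact k) * z ^ k)"

end

theory Submission
  imports Defs
begin

text \<open>Put \<open>m = n/2 - 1\<close>. Up to the factor \<open>B(1/2, m)\<close>, the left-hand side is the integral over
  the unit disk of \<open>(1 - x\<^sup>2 - y\<^sup>2) powr (m - 1) x\<^sup>2 (1 - 2 \<rho> (x cos \<alpha> + y sin \<alpha>) + \<rho>\<^sup>2) powr (-m)\<close>:
  integrating out \<open>y\<close> along a chord, expanding the kernel binomially and integrating term by term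
  against Beta moments produces the hypergeometric series (Euler's integral). Rotating the disk by
  \<open>\<alpha>\<close> moves the angle from the kernel into the factor \<open>(x cos \<alpha> - y sin \<alpha>)\<^sup>2\<close>, whose cross term
  vanishes by the symmetry \<open>y \<mapsto> -y\<close>. Integrating \<open>y\<close> out of the remaining terms
  \<open>x\<^sup>2 cos\<^sup>2 \<alpha>\<close> and \<open>y\<^sup>2 sin\<^sup>2 \<alpha>\<close> gives the two integrals on the right, since
  \<open>B(3/2, m) = B(1/2, m) / (n - 1)\<close>. All integrals are handled as nonnegative Lebesgue integrals,
  which are finite for \<open>n \<ge> 3\<close>.\<close>

lemma has_integral_of_set_nn_integral:
  fixes f :: "'a::euclidean_space \<Rightarrow> real"
  assumes [measurable]: "f \<in> borel_measurable borel" "S \<in> sets borel"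
    and nonneg: "\<And>x. x \<in> S \<Longrightarrow> 0 \<le> f x"
    and I: "(\<integral>\<^sup>+x\<in>S. ennreal (f x) \<partial>lborel) = ennreal r" and r: "0 \<le> r"
  shows "(f has_integral r) S"
proof -
  have "(\<lambda>x. ennreal (f x) * indicator S x) = (\<lambda>x. ennreal (indicator S x * f x))"
    by (auto simp: indicator_def fun_eq_iff)
  with I r have "((\<lambda>x. indicator S x * f x) has_integral r) UNIV"
    by (intro nn_integral_has_integral) (auto simp: nonneg indicator_def)
  then show ?thesis
    by (simp add: indicator_times_eq_if has_integral_restrict_UNIV)
qed

lemma integral_eq_enn2real_set_nn_integral:
  fixes f :: "'a::euclidean_space \<Rightarrow> real"
  assumes f[measurable]: "f \<in> borel_measurable borel" and S[measurable]: "S \<in> sets borel"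
    and nonneg: "\<And>x. x \<in> S \<Longrightarrow> 0 \<le> f x"
  shows "integral S f = enn2real (\<integral>\<^sup>+x\<in>S. ennreal (f x) \<partial>lborel)"
proof (cases "f integrable_on S")
  case True
  then have "(f has_integral integral S f) S"
    by (simp add: has_integral_integral)
  then show ?thesis
    using nonneg nn_integral_has_integral_lebesgue'[of S f] integral_nonneg[OF True nonneg]
    by simp
next
  case False
  have "(\<integral>\<^sup>+x\<in>S. ennreal (f x) \<partial>lborel) = \<infinity>"
  proof (rule ccontr)
    assume "(\<integral>\<^sup>+x\<in>S. ennreal (f x) \<partial>lborel) \<noteq> \<infinity>"
    then obtain r where "(\<integral>\<^sup>+x\<in>S. ennreal (f x) \<partial>lborel) = ennreal r" "0 \<le> r"
      by (metis ennreal_cases infinity_ennreal_def)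
    with False show False
      using has_integral_of_set_nn_integral[OF f S nonneg] by blast
  qed
  then show ?thesis
    using False by (simp add: not_integrable_integral)
qed

section \<open>Rigid motions of the plane\<close>

lemma nn_integral_lborel_pair_shear_fst:
  fixes h :: "real \<times> real \<Rightarrow> ennreal"
  assumes [measurable]: "h \<in> borel_measurable (lborel \<Otimes>\<^sub>M lborel)"
  shows "(\<integral>\<^sup>+z. h (fst z + a * snd z, snd z) \<partial>(lborel \<Otimes>\<^sub>M lborel)) = (\<integral>\<^sup>+z. h z \<partial>(lborel \<Otimes>\<^sub>M lborel))"
proof -
  have "(\<integral>\<^sup>+z. h (fst z + a * snd z, snd z) \<partial>(lborel \<Otimes>\<^sub>M lborel))
      = (\<integral>\<^sup>+y. \<integral>\<^sup>+x. h (x + a * y, y) \<partial>lborel \<partial>lborel)"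
    by (subst lborel_pair.nn_integral_snd[symmetric]) simp_all
  also have "\<dots> = (\<integral>\<^sup>+y. \<integral>\<^sup>+x. h (x, y) \<partial>lborel \<partial>lborel)"
  proof (rule nn_integral_cong)
    show "(\<integral>\<^sup>+x. h (x + a * y, y) \<partial>lborel) = (\<integral>\<^sup>+x. h (x, y) \<partial>lborel)" for y
      using nn_integral_real_affine[of "\<lambda>x. h (x, y)" 1 "a * y"] by (simp add: add.commute)
  qed
  also have "\<dots> = (\<integral>\<^sup>+z. h z \<partial>(lborel \<Otimes>\<^sub>M lborel))"
    by (subst lborel_pair.nn_integral_snd[symmetric]) simp_all
  finally show ?thesis .
qed

lemma nn_integral_lborel_pair_shear_snd:
  fixes h :: "real \<times> real \<Rightarrow> ennreal"
  assumes [measurable]: "h \<in> borel_measurable (lborel \<Otimes>\<^sub>M lborel)"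
  shows "(\<integral>\<^sup>+z. h (fst z, snd z + b * fst z) \<partial>(lborel \<Otimes>\<^sub>M lborel)) = (\<integral>\<^sup>+z. h z \<partial>(lborel \<Otimes>\<^sub>M lborel))"
proof -
  have "(\<integral>\<^sup>+z. h (fst z, snd z + b * fst z) \<partial>(lborel \<Otimes>\<^sub>M lborel))
      = (\<integral>\<^sup>+x. \<integral>\<^sup>+y. h (x, y + b * x) \<partial>lborel \<partial>lborel)"
    by (subst lborel.nn_integral_fst[symmetric]) simp_all
  also have "\<dots> = (\<integral>\<^sup>+x. \<integral>\<^sup>+y. h (x, y) \<partial>lborel \<partial>lborel)"
  proof (rule nn_integral_cong)
    show "(\<integral>\<^sup>+y. h (x, y + b * x) \<partial>lborel) = (\<integral>\<^sup>+y. h (x, y) \<partial>lborel)" for x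
      using nn_integral_real_affine[of "\<lambda>y. h (x, y)" 1 "b * x"] by (simp add: add.commute)
  qed
  also have "\<dots> = (\<integral>\<^sup>+z. h z \<partial>(lborel \<Otimes>\<^sub>M lborel))"
    by (subst lborel.nn_integral_fst[symmetric]) simp_all
  finally show ?thesis .
qed

lemma nn_integral_lborel_pair_reflect_snd:
  fixes h :: "real \<times> real \<Rightarrow> ennreal"
  assumes [measurable]: "h \<in> borel_measurable (lborel \<Otimes>\<^sub>M lborel)"
  shows "(\<integral>\<^sup>+z. h (fst z, - snd z) \<partial>(lborel \<Otimes>\<^sub>M lborel)) = (\<integral>\<^sup>+z. h z \<partial>(lborel \<Otimes>\<^sub>M lborel))"
proof -
  have "(\<integral>\<^sup>+z. h (fst z, - snd z) \<partial>(lborel \<Otimes>\<^sub>M lborel))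
      = (\<integral>\<^sup>+x. \<integral>\<^sup>+y. h (x, - y) \<partial>lborel \<partial>lborel)"
    by (subst lborel.nn_integral_fst[symmetric]) simp_all
  also have "\<dots> = (\<integral>\<^sup>+x. \<integral>\<^sup>+y. h (x, y) \<partial>lborel \<partial>lborel)"
    using nn_integral_real_affine[of "\<lambda>y. h (_, y)" "-1" 0] by simp
  also have "\<dots> = (\<integral>\<^sup>+z. h z \<partial>(lborel \<Otimes>\<^sub>M lborel))"
    by (subst lborel.nn_integral_fst[symmetric]) simp_all
  finally show ?thesis .
qed

text \<open>A rotation with \<open>s \<noteq> 0\<close> is the product of three shears
  \<open>(x, y) \<mapsto> (x + a y, y)\<close>, \<open>(x, y) \<mapsto> (x, y + s x)\<close>, \<open>(x, y) \<mapsto> (x + a y, y)\<close>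
  with \<open>a = (c - 1) / s\<close>.\<close>
lemma nn_integral_lborel_pair_rotation_shears:
  fixes h :: "real \<times> real \<Rightarrow> ennreal"
  assumes [measurable]: "h \<in> borel_measurable (lborel \<Otimes>\<^sub>M lborel)"
    and cs: "c\<^sup>2 + s\<^sup>2 = 1" and s: "s \<noteq> 0"
  shows "(\<integral>\<^sup>+z. h (fst z * c - snd z * s, fst z * s + snd z * c) \<partial>(lborel \<Otimes>\<^sub>M lborel))
       = (\<integral>\<^sup>+z. h z \<partial>(lborel \<Otimes>\<^sub>M lborel))"
proof -
  define a where "a = (c - 1) / s"
  have c: "1 + a * s = c"
    using s by (simp add: a_def field_simps)
  have "(2 * a + a * a * s) * s = (c - 1) * (c + 1)"
    using s by (simp add: a_def field_simps power2_eq_square)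
  also have "\<dots> = (- s) * s"
    using cs by (simp add: algebra_simps power2_eq_square)
  finally have s': "2 * a + a * a * s = - s"
    using s by (metis mult_right_cancel)
  have rotation: "(fst z * c - snd z * s, fst z * s + snd z * c)
      = (fst z + a * snd z + a * (snd z + s * (fst z + a * snd z)), snd z + s * (fst z + a * snd z))" for z
    using arg_cong[OF c, of "\<lambda>t. fst z * t"] arg_cong[OF c, of "\<lambda>t. snd z * t"]
      arg_cong[OF s', of "\<lambda>t. snd z * t"]
    by (simp add: algebra_simps)
  have "(\<integral>\<^sup>+z. h (fst z * c - snd z * s, fst z * s + snd z * c) \<partial>(lborel \<Otimes>\<^sub>M lborel))
      = (\<integral>\<^sup>+z. h (fst z + a * (snd z + s * fst z), snd z + s * fst z) \<partial>(lborel \<Otimes>\<^sub>M lborel))"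
    unfolding rotation
    using nn_integral_lborel_pair_shear_fst[of "\<lambda>z. h (fst z + a * (snd z + s * fst z), snd z + s * fst z)" a]
    by simp
  also have "\<dots> = (\<integral>\<^sup>+z. h (fst z + a * snd z, snd z) \<partial>(lborel \<Otimes>\<^sub>M lborel))"
    using nn_integral_lborel_pair_shear_snd[of "\<lambda>z. h (fst z + a * snd z, snd z)" s] by simp
  also have "\<dots> = (\<integral>\<^sup>+z. h z \<partial>(lborel \<Otimes>\<^sub>M lborel))"
    by (rule nn_integral_lborel_pair_shear_fst) simp
  finally show ?thesis .
qed

lemma nn_integral_lborel_pair_rotation:
  fixes h :: "real \<times> real \<Rightarrow> ennreal"
  assumes [measurable]: "h \<in> borel_measurable (lborel \<Otimes>\<^sub>M lborel)"
    and cs: "c\<^sup>2 + s\<^sup>2 = 1"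
  shows "(\<integral>\<^sup>+z. h (fst z * c - snd z * s, fst z * s + snd z * c) \<partial>(lborel \<Otimes>\<^sub>M lborel))
       = (\<integral>\<^sup>+z. h z \<partial>(lborel \<Otimes>\<^sub>M lborel))"
proof (cases "s = 0")
  case False
  with cs show ?thesis
    by (rule nn_integral_lborel_pair_rotation_shears[OF assms(1)])
next
  case True
  then consider "c = 1" | "c = -1"
    using cs by (auto simp: power2_eq_1_iff)
  then show ?thesis
  proof cases
    case 1
    with True show ?thesis by simp
  next
    case 2
    \<comment> \<open>the half turn is the square of the quarter turn \<open>(x, y) \<mapsto> (- y, x)\<close>\<close>
    have quarter: "(\<integral>\<^sup>+z. g (- snd z, fst z) \<partial>(lborel \<Otimes>\<^sub>M lborel)) = (\<integral>\<^sup>+z. g z \<partial>(lborel \<Otimes>\<^sub>M lborel))"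
      if [measurable]: "g \<in> borel_measurable (lborel \<Otimes>\<^sub>M lborel)" for g :: "real \<times> real \<Rightarrow> ennreal"
      using nn_integral_lborel_pair_rotation_shears[of g 0 1] by simp
    have "(\<integral>\<^sup>+z. h (- fst z, - snd z) \<partial>(lborel \<Otimes>\<^sub>M lborel))
        = (\<integral>\<^sup>+z. h (- snd z, fst z) \<partial>(lborel \<Otimes>\<^sub>M lborel))"
      using quarter[of "\<lambda>z. h (- snd z, fst z)"] by simp
    also have "\<dots> = (\<integral>\<^sup>+z. h z \<partial>(lborel \<Otimes>\<^sub>M lborel))"
      by (rule quarter) simp
    finally show ?thesis
      using True 2 by simp
  qed
qed

text \<open>The cross term \<open>2 c s x y\<close> integrates to zero against a weight that is even in \<open>y\<close>;
  in \<open>ennreal\<close> this is expressed by adding the reflected integral instead of subtracting.\<close>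
lemma nn_integral_lborel_pair_square_linear_form:
  fixes h :: "real \<times> real \<Rightarrow> ennreal"
  assumes [measurable]: "h \<in> borel_measurable (lborel \<Otimes>\<^sub>M lborel)"
    and even: "\<And>x y. h (x, - y) = h (x, y)"
  shows "(\<integral>\<^sup>+z. h z * ennreal ((fst z * c + snd z * s)\<^sup>2) \<partial>(lborel \<Otimes>\<^sub>M lborel))
       = ennreal (c\<^sup>2) * (\<integral>\<^sup>+z. h z * ennreal ((fst z)\<^sup>2) \<partial>(lborel \<Otimes>\<^sub>M lborel))
         + ennreal (s\<^sup>2) * (\<integral>\<^sup>+z. h z * ennreal ((snd z)\<^sup>2) \<partial>(lborel \<Otimes>\<^sub>M lborel))"
    (is "?L = ?R")
proof -
  have "?L = (\<integral>\<^sup>+z. h z * ennreal ((fst z * c - snd z * s)\<^sup>2) \<partial>(lborel \<Otimes>\<^sub>M lborel))"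
    using nn_integral_lborel_pair_reflect_snd[of "\<lambda>z. h z * ennreal ((fst z * c - snd z * s)\<^sup>2)"]
    by (simp add: even)
  then have "2 * ?L = (\<integral>\<^sup>+z. h z * ennreal ((fst z * c + snd z * s)\<^sup>2) + h z * ennreal ((fst z * c - snd z * s)\<^sup>2) \<partial>(lborel \<Otimes>\<^sub>M lborel))"
    by (simp add: mult_2 nn_integral_add)
  also have "\<dots> = (\<integral>\<^sup>+z. ennreal (2 * c\<^sup>2) * (h z * ennreal ((fst z)\<^sup>2)) + ennreal (2 * s\<^sup>2) * (h z * ennreal ((snd z)\<^sup>2)) \<partial>(lborel \<Otimes>\<^sub>M lborel))"
  proof (rule nn_integral_cong)
    fix z :: "real \<times> real"
    have "(fst z * c + snd z * s)\<^sup>2 + (fst z * c - snd z * s)\<^sup>2 = 2 * c\<^sup>2 * (fst z)\<^sup>2 + 2 * s\<^sup>2 * (snd z)\<^sup>2"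
      by (simp add: power2_eq_square algebra_simps)
    then have "ennreal ((fst z * c + snd z * s)\<^sup>2) + ennreal ((fst z * c - snd z * s)\<^sup>2)
        = ennreal (2 * c\<^sup>2) * ennreal ((fst z)\<^sup>2) + ennreal (2 * s\<^sup>2) * ennreal ((snd z)\<^sup>2)"
      by (simp add: ennreal_plus[symmetric] ennreal_mult[symmetric] del: ennreal_plus)
    then show "h z * ennreal ((fst z * c + snd z * s)\<^sup>2) + h z * ennreal ((fst z * c - snd z * s)\<^sup>2)
        = ennreal (2 * c\<^sup>2) * (h z * ennreal ((fst z)\<^sup>2)) + ennreal (2 * s\<^sup>2) * (h z * ennreal ((snd z)\<^sup>2))"
      unfolding distrib_left[symmetric] by (simp add: distrib_left mult_ac)
  qed
  also have "\<dots> = 2 * ?R"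
    by (simp add: nn_integral_add nn_integral_cmult ennreal_mult' distrib_left mult.assoc)
  finally show ?thesis
    by (simp only: ennreal_mult_cancel_left) simp
qed

section \<open>Beta moments and Euler's integral for the hypergeometric function\<close>

lemma Beta_real_pos: "0 < a \<Longrightarrow> 0 < b \<Longrightarrow> 0 < Beta a (b::real)"
  by (simp add: Beta_def)

lemma Beta_nat_plus_half:
  fixes q :: real
  assumes q: "0 < q"
  shows "Beta (real j + 1/2) q = Beta (1/2) q * pochhammer (1/2) j / pochhammer (q + 1/2) j"
proof -
  have not_pole: "x \<notin> \<int>\<^sub>\<le>\<^sub>0" if "0 < x" for x :: real
    using that nonpos_Ints_nonpos by fastforce
  have Gamma_nonzero: "Gamma (1/2::real) \<noteq> 0" "Gamma (q + 1/2) \<noteq> 0"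
    using q by (auto intro!: Gamma_real_pos[THEN order.strict_implies_not_eq, symmetric])
  have "Gamma (1/2 + real j) = pochhammer (1/2) j * Gamma (1/2)"
    using pochhammer_Gamma[OF not_pole, of "1/2" j] Gamma_nonzero by simp
  moreover have "Gamma (q + 1/2 + real j) = pochhammer (q + 1/2) j * Gamma (q + 1/2)"
    using pochhammer_Gamma[OF not_pole, of "q + 1/2" j] Gamma_nonzero q by simp
  moreover have "0 < pochhammer (q + 1/2) j"
    using q by (intro pochhammer_pos) simp
  ultimately show ?thesis
    using q by (simp add: Beta_def field_simps ac_simps)
qed

lemma pochhammer_double_div_fact:
  fixes m :: real
  shows "pochhammer m (2*j) / fact (2*j) * pochhammer (1/2) j
       = pochhammer (m/2) j * pochhammer ((m+1)/2) j / fact j"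
proof -
  have "pochhammer m (2*j) = 2^(2*j) * pochhammer (m/2) j * pochhammer ((m+1)/2) j"
    using pochhammer_double[of "m/2" j] by (simp add: add_divide_distrib)
  moreover have "fact (2*j) = (2^(2*j) * pochhammer (1/2) j * fact j :: real)"
    by (rule fact_double)
  moreover have "pochhammer (1/2::real) j \<noteq> 0"
    by (simp add: pochhammer_eq_0_iff)
  ultimately show ?thesis
    by (simp add: field_simps)
qed

lemma pochhammer_double_Beta:
  fixes m q :: real
  assumes q: "0 < q"
  shows "pochhammer m (2*j) / fact (2*j) * Beta (real j + 1/2) q
       = Beta (1/2) q * (pochhammer (m/2) j * pochhammer ((m+1)/2) j / (pochhammer (q + 1/2) j * fact j))"
proof -
  have "0 < pochhammer (q + 1/2) j"
    using q by (intro pochhammer_pos) simp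
  then show ?thesis
    using pochhammer_double_div_fact[of m j] unfolding Beta_nat_plus_half[OF q]
    by (simp add: field_simps)
qed

lemma nn_integral_even_Ioo:
  fixes F :: "real \<Rightarrow> ennreal"
  assumes [measurable]: "F \<in> borel_measurable borel" and even: "\<And>t. F (- t) = F t"
  shows "(\<integral>\<^sup>+t\<in>{-1<..<1}. F t \<partial>lborel) = 2 * (\<integral>\<^sup>+t\<in>{0..1}. F t \<partial>lborel)"
proof -
  have "AE t in lborel. F t * indicator {-1<..<1} t = F t * indicator {-1..0} t + F t * indicator {0..1} t"
    using AE_lborel_singleton[of "-1"] AE_lborel_singleton[of 0] AE_lborel_singleton[of 1]
    by eventually_elim (auto simp: indicator_def)
  then have "(\<integral>\<^sup>+t\<in>{-1<..<1}. F t \<partial>lborel)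
      = (\<integral>\<^sup>+t\<in>{-1..0}. F t \<partial>lborel) + (\<integral>\<^sup>+t\<in>{0..1}. F t \<partial>lborel)"
    by (subst nn_integral_add[symmetric]) (auto intro: nn_integral_cong_AE)
  also have "(\<integral>\<^sup>+t\<in>{-1..0}. F t \<partial>lborel) = (\<integral>\<^sup>+t\<in>{0..1}. F t \<partial>lborel)"
    using nn_integral_real_affine[of "\<lambda>t. F t * indicator {-1..0} t" "-1" 0]
    by (simp add: even indicator_def conj_commute)
  finally show ?thesis
    by (simp add: mult_2)
qed

lemma nn_integral_square_substitution:
  fixes f :: "real \<Rightarrow> real"
  assumes [measurable]: "f \<in> borel_measurable borel"
  shows "(\<integral>\<^sup>+v\<in>{0..1}. ennreal (f v) \<partial>lborel) = (\<integral>\<^sup>+t\<in>{0..1}. ennreal (f (t\<^sup>2) * (2 * t)) \<partial>lborel)"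
proof -
  have "(\<integral>\<^sup>+v. f v * indicator {(\<lambda>t. t\<^sup>2) 0..(\<lambda>t. t\<^sup>2) 1} v \<partial>lborel)
      = (\<integral>\<^sup>+t. f ((\<lambda>t. t\<^sup>2) t) * (2 * t) * indicator {0..1} t \<partial>lborel)"
    by (rule nn_integral_substitution)
       (auto simp: set_borel_measurable_def intro!: derivative_eq_intros continuous_intros)
  then show ?thesis
    by (simp add: ennreal_indicator[symmetric] ennreal_mult' [symmetric] ennreal_mult'' [symmetric] mult_ac)
qed

lemma nn_integral_even_moment:
  fixes p :: real
  assumes p: "-1 < p"
  shows "(\<integral>\<^sup>+t\<in>{-1<..<1}. ennreal (t^(2*j) * (1 - t\<^sup>2) powr p) \<partial>lborel)
       = ennreal (Beta (real j + 1/2) (p + 1))"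
proof -
  define F where "F t = ennreal (t^(2*j) * (1 - t\<^sup>2) powr p)" for t :: real
  define f where "f v = v powr (real j - 1/2) * (1 - v) powr p" for v :: real
  have [measurable]: "F \<in> borel_measurable borel" "f \<in> borel_measurable borel"
    unfolding F_def f_def by measurable
  have "(\<integral>\<^sup>+t\<in>{-1<..<1}. F t \<partial>lborel) = (\<integral>\<^sup>+t\<in>{0..1}. 2 * F t \<partial>lborel)"
    by (simp add: nn_integral_even_Ioo F_def nn_integral_cmult mult.assoc)
  also have "\<dots> = (\<integral>\<^sup>+t\<in>{0..1}. ennreal (f (t\<^sup>2) * (2 * t)) \<partial>lborel)"
  proof (rule nn_integral_cong_AE)
    show "AE t in lborel. 2 * F t * indicator {0..1} t = ennreal (f (t\<^sup>2) * (2 * t)) * indicator {0..1} t"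
      using AE_lborel_singleton[of 0]
    proof eventually_elim
      case (elim t)
      show ?case
      proof (cases "t \<in> {0..1}")
        case True
        with elim have t: "0 < t"
          by auto
        have "(t\<^sup>2) powr (real j - 1/2) * t = t * t powr (2 * (real j - 1/2))"
          using t powr_powr[of t 2 "real j - 1/2"] by (simp add: powr_numeral)
        also have "\<dots> = t^(2*j)"
          using t by (simp add: powr_mult_base algebra_simps flip: powr_realpow)
        finally have "f (t\<^sup>2) * (2 * t) = 2 * (t^(2*j) * (1 - t\<^sup>2) powr p)"
          by (simp add: f_def mult_ac)
        then have "ennreal (f (t\<^sup>2) * (2 * t)) = 2 * F t"
          unfolding F_def by (simp only: ennreal_mult'[of 2, simplified])
        with True show ?thesis
          by simp
      qed simp
    qed
  qed
  also have "\<dots> = (\<integral>\<^sup>+v\<in>{0..1}. ennreal (f v) \<partial>lborel)"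
    by (rule nn_integral_square_substitution[symmetric]) simp
  also have "\<dots> = ennreal (Beta (real j + 1/2) (p + 1))"
    using has_integral_Beta_real[of "real j + 1/2" "p + 1"] p
    by (intro nn_integral_has_integral_lebesgue') (simp_all add: f_def [abs_def])
  finally show ?thesis
    by (simp add: F_def)
qed

lemma borel_measurable_hyp2F1 [measurable]: "hyp2F1 a b c \<in> borel_measurable borel"
  unfolding hyp2F1_def [abs_def] by measurable

lemma hyp2F1_coeff_nonneg:
  fixes a b c :: real
  assumes "0 < a" "0 < b" "0 < c"
  shows "0 \<le> pochhammer a j * pochhammer b j / (pochhammer c j * fact j)"
  using assms by (auto intro!: divide_nonneg_pos mult_nonneg_nonneg mult_pos_pos pochhammer_nonneg pochhammer_pos)

lemma sums_binomial_even_part: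
  fixes m w :: real
  assumes w: "\<bar>w\<bar> < 1"
  shows "(\<lambda>j. 2 * (pochhammer m (2*j) / fact (2*j)) * w^(2*j)) sums ((1 - w) powr (-m) + (1 + w) powr (-m))"
proof -
  define f where "f k = pochhammer m k / fact k * (w^k + (-w)^k)" for k
  have "(\<lambda>k. ((-m) gchoose k) * (-w)^k + ((-m) gchoose k) * w^k) sums ((1 - w) powr (-m) + (1 + w) powr (-m))"
    using sums_add[OF gen_binomial_real[of "-w" "-m"] gen_binomial_real[of w "-m"]] w by simp
  moreover have "((-m) gchoose k) * (-w)^k + ((-m) gchoose k) * w^k = f k" for k
  proof -
    have "(-1::real)^k * (-w)^k = w^k" "(-1::real)^k * w^k = (-w)^k"
      by (simp_all flip: power_mult_distrib)
    then show ?thesis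
      by (simp add: f_def gbinomial_pochhammer algebra_simps)
  qed
  ultimately have "f sums ((1 - w) powr (-m) + (1 + w) powr (-m))"
    by simp
  from sums_group[OF this, of 2]
  have "(\<lambda>j. sum f {j * 2..<j * 2 + 2}) sums ((1 - w) powr (-m) + (1 + w) powr (-m))"
    by simp
  moreover have "sum f {j * 2..<j * 2 + 2} = 2 * (pochhammer m (2*j) / fact (2*j)) * w^(2*j)" for j
  proof -
    have "{j * 2..<j * 2 + 2} = {2*j, Suc (2*j)}"
      by auto
    then show ?thesis
      by (simp add: f_def power_mult)
  qed
  ultimately show ?thesis
    by simp
qed

lemma nn_integral_euler_symmetrized:
  fixes m p u :: real
  assumes m: "0 < m" and p: "-1 < p" and u: "\<bar>u\<bar> < 1"
  shows "(\<integral>\<^sup>+t\<in>{-1<..<1}. ennreal ((1 - t\<^sup>2) powr p * (1 - u * t) powr (-m)) \<partial>lborel)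
         + (\<integral>\<^sup>+t\<in>{-1<..<1}. ennreal ((1 - t\<^sup>2) powr p * (1 + u * t) powr (-m)) \<partial>lborel)
       = (\<Sum>j. ennreal (2 * (pochhammer m (2*j) / fact (2*j)) * u^(2*j) * Beta (real j + 1/2) (p + 1)))"
proof -
  define e where "e j = 2 * (pochhammer m (2*j) / fact (2*j)) * u^(2*j)" for j
  have e_nonneg: "0 \<le> e j" for j
    using m by (auto simp: e_def power_mult intro!: mult_nonneg_nonneg divide_nonneg_pos pochhammer_nonneg)
  have binomial: "ennreal ((1 - t\<^sup>2) powr p * (1 - u * t) powr (-m)) * indicator {-1<..<1} t
      + ennreal ((1 - t\<^sup>2) powr p * (1 + u * t) powr (-m)) * indicator {-1<..<1} t
      = (\<Sum>j. ennreal (e j) * (ennreal (t^(2*j) * (1 - t\<^sup>2) powr p) * indicator {-1<..<1} t))" for t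
  proof (cases "t \<in> {-1<..<1}")
    case True
    then have "\<bar>u * t\<bar> < 1"
      using u by (auto simp: abs_mult intro: le_less_trans[OF mult_left_le_one_le])
    from sums_mult[OF sums_binomial_even_part[OF this, of m], of "(1 - t\<^sup>2) powr p"]
    have "(\<lambda>j. e j * (t^(2*j) * (1 - t\<^sup>2) powr p))
        sums ((1 - t\<^sup>2) powr p * (1 - u * t) powr (-m) + (1 - t\<^sup>2) powr p * (1 + u * t) powr (-m))"
      by (simp add: e_def power_mult_distrib mult_ac ring_distribs)
    then have "(\<Sum>j. ennreal (e j * (t^(2*j) * (1 - t\<^sup>2) powr p)))
        = ennreal ((1 - t\<^sup>2) powr p * (1 - u * t) powr (-m) + (1 - t\<^sup>2) powr p * (1 + u * t) powr (-m))"
      by (rule suminf_ennreal_eq[rotated]) (use e_nonneg in simp)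
    with True show ?thesis
      using e_nonneg by (simp add: ennreal_mult' ennreal_plus)
  qed simp
  have "(\<integral>\<^sup>+t\<in>{-1<..<1}. ennreal ((1 - t\<^sup>2) powr p * (1 - u * t) powr (-m)) \<partial>lborel)
        + (\<integral>\<^sup>+t\<in>{-1<..<1}. ennreal ((1 - t\<^sup>2) powr p * (1 + u * t) powr (-m)) \<partial>lborel)
      = (\<Sum>j. \<integral>\<^sup>+t. ennreal (e j) * (ennreal (t^(2*j) * (1 - t\<^sup>2) powr p) * indicator {-1<..<1} t) \<partial>lborel)"
    by (simp add: nn_integral_add[symmetric] binomial nn_integral_suminf del: nn_integral_add)
  also have "\<dots> = (\<Sum>j. ennreal (e j * Beta (real j + 1/2) (p + 1)))"
  proof (rule suminf_cong)
    fix j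
    have "(\<integral>\<^sup>+t. ennreal (e j) * (ennreal (t^(2*j) * (1 - t\<^sup>2) powr p) * indicator {-1<..<1} t) \<partial>lborel)
        = ennreal (e j) * ennreal (Beta (real j + 1/2) (p + 1))"
      using p by (simp add: nn_integral_cmult nn_integral_even_moment)
    then show "(\<integral>\<^sup>+t. ennreal (e j) * (ennreal (t^(2*j) * (1 - t\<^sup>2) powr p) * indicator {-1<..<1} t) \<partial>lborel)
        = ennreal (e j * Beta (real j + 1/2) (p + 1))"
      using Beta_real_pos[of "real j + 1/2" "p + 1"] p by (simp add: ennreal_mult'')
  qed
  finally show ?thesis
    by (simp add: e_def)
qed

lemma nn_integral_euler_series:
  fixes m p u :: real
  assumes m: "0 < m" and p: "-1 < p" and u: "\<bar>u\<bar> < 1"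
  shows "(\<integral>\<^sup>+t\<in>{-1<..<1}. ennreal ((1 - t\<^sup>2) powr p * (1 - u * t) powr (-m)) \<partial>lborel)
       = (\<Sum>j. ennreal (Beta (1/2) (p + 1)
            * (pochhammer (m/2) j * pochhammer ((m+1)/2) j / (pochhammer (p + 3/2) j * fact j)) * (u\<^sup>2)^j))"
    (is "?I = (\<Sum>j. ennreal (?a j))")
proof -
  have "?I = (\<integral>\<^sup>+t\<in>{-1<..<1}. ennreal ((1 - t\<^sup>2) powr p * (1 + u * t) powr (-m)) \<partial>lborel)"
    using nn_integral_real_affine[of "\<lambda>t. ennreal ((1 - t\<^sup>2) powr p * (1 - u * t) powr (-m)) * indicator {-1<..<1} t" "-1" 0]
    by (simp add: indicator_def conj_commute)
  then have "2 * ?I = ?I + (\<integral>\<^sup>+t\<in>{-1<..<1}. ennreal ((1 - t\<^sup>2) powr p * (1 + u * t) powr (-m)) \<partial>lborel)"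
    unfolding mult_2 by (rule arg_cong)
  also have "\<dots> = (\<Sum>j. ennreal (2 * (pochhammer m (2*j) / fact (2*j)) * u^(2*j) * Beta (real j + 1/2) (p + 1)))"
    by (rule nn_integral_euler_symmetrized[OF m p u])
  also have "\<dots> = (\<Sum>j. 2 * ennreal (?a j))"
  proof (rule suminf_cong)
    fix j
    have "pochhammer m (2*j) / fact (2*j) * Beta (real j + 1/2) (p + 1)
        = Beta (1/2) (p + 1) * (pochhammer (m/2) j * pochhammer ((m+1)/2) j / (pochhammer (p + 3/2) j * fact j))"
      using pochhammer_double_Beta[of "p + 1" m j] p by (simp add: add.commute)
    moreover have "2 * (pochhammer m (2*j) / fact (2*j)) * u^(2*j) * Beta (real j + 1/2) (p + 1)
        = 2 * (u\<^sup>2)^j * (pochhammer m (2*j) / fact (2*j) * Beta (real j + 1/2) (p + 1))"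
      by (simp add: power_mult)
    ultimately have "2 * (pochhammer m (2*j) / fact (2*j)) * u^(2*j) * Beta (real j + 1/2) (p + 1) = 2 * ?a j"
      by simp
    moreover have "0 \<le> ?a j"
      using hyp2F1_coeff_nonneg[of "m/2" "(m+1)/2" "p + 3/2" j] Beta_real_pos[of "1/2" "p + 1"] m p
      by (intro mult_nonneg_nonneg) simp_all
    ultimately show "ennreal (2 * (pochhammer m (2*j) / fact (2*j)) * u^(2*j) * Beta (real j + 1/2) (p + 1))
        = 2 * ennreal (?a j)"
      by (simp only: ennreal_mult'[of 2, simplified])
  qed
  also have "\<dots> = 2 * (\<Sum>j. ennreal (?a j))"
    by simp
  finally show ?thesis
    by (simp add: ennreal_mult_cancel_left)
qed

lemma nn_integral_euler_kernel_finite: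
  fixes m p u :: real
  assumes m: "0 \<le> m" and p: "-1 < p" and u: "\<bar>u\<bar> < 1"
  shows "(\<integral>\<^sup>+t\<in>{-1<..<1}. ennreal ((1 - t\<^sup>2) powr p * (1 - u * t) powr (-m)) \<partial>lborel) < \<infinity>"
proof -
  have "(\<integral>\<^sup>+t\<in>{-1<..<1}. ennreal ((1 - t\<^sup>2) powr p * (1 - u * t) powr (-m)) \<partial>lborel)
      \<le> (\<integral>\<^sup>+t. ennreal ((1 - \<bar>u\<bar>) powr (-m)) * (ennreal (t^(2*0) * (1 - t\<^sup>2) powr p) * indicator {-1<..<1} t) \<partial>lborel)"
  proof (rule nn_integral_mono)
    fix t :: real
    show "ennreal ((1 - t\<^sup>2) powr p * (1 - u * t) powr (-m)) * indicator {-1<..<1} t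
        \<le> ennreal ((1 - \<bar>u\<bar>) powr (-m)) * (ennreal (t^(2*0) * (1 - t\<^sup>2) powr p) * indicator {-1<..<1} t)"
    proof (cases "t \<in> {-1<..<1}")
      case True
      then have "\<bar>t\<bar> \<le> 1"
        by auto
      then have "\<bar>u\<bar> * \<bar>t\<bar> \<le> \<bar>u\<bar>"
        by (simp add: mult_right_le_one_le)
      then have "u * t \<le> \<bar>u\<bar>"
        using abs_ge_self[of "u * t"] abs_mult[of u t] by linarith
      then have "(1 - u * t) powr (-m) \<le> (1 - \<bar>u\<bar>) powr (-m)"
        using u m by (intro powr_mono2') auto
      then have "(1 - t\<^sup>2) powr p * (1 - u * t) powr (-m) \<le> (1 - \<bar>u\<bar>) powr (-m) * (1 - t\<^sup>2) powr p"
        by (simp add: mult.commute mult_right_mono)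
      with True show ?thesis
        by (simp add: ennreal_mult'[symmetric] ennreal_leI)
    qed simp
  qed
  also have "\<dots> < \<infinity>"
    using nn_integral_even_moment[OF p, of 0] by (simp add: nn_integral_cmult ennreal_mult_less_top)
  finally show ?thesis .
qed



lemma has_integral_euler_hyp2F1:
  fixes m p u :: real
  assumes m: "0 < m" and p: "-1 < p" and u: "\<bar>u\<bar> < 1"
  shows "((\<lambda>t. (1 - t\<^sup>2) powr p * (1 - u * t) powr (-m))
          has_integral Beta (1/2) (p + 1) * hyp2F1 (m/2) ((m+1)/2) (p + 3/2) (u\<^sup>2)) {-1<..<1}"
proof -
  define c where "c j = pochhammer (m/2) j * pochhammer ((m+1)/2) j / (pochhammer (p + 3/2) j * fact j) * (u\<^sup>2)^j" for j
  have B: "0 < Beta (1/2) (p + 1)"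
    using p by (intro Beta_real_pos) simp_all
  have c_nonneg: "0 \<le> Beta (1/2) (p + 1) * c j" for j
    using hyp2F1_coeff_nonneg[of "m/2" "(m+1)/2" "p + 3/2" j] B m p
    unfolding c_def by (intro mult_nonneg_nonneg) simp_all
  have series: "(\<integral>\<^sup>+t\<in>{-1<..<1}. ennreal ((1 - t\<^sup>2) powr p * (1 - u * t) powr (-m)) \<partial>lborel)
      = (\<Sum>j. ennreal (Beta (1/2) (p + 1) * c j))"
    using nn_integral_euler_series[OF m p u] by (simp add: c_def mult.assoc)
  \<comment> \<open>convergence of the hypergeometric series comes from the finiteness of the integral\<close>
  then have "(\<Sum>j. ennreal (Beta (1/2) (p + 1) * c j)) \<noteq> top"
    using nn_integral_euler_kernel_finite[of m p u] m p u by simp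
  with c_nonneg have "summable (\<lambda>j. Beta (1/2) (p + 1) * c j)"
    by (rule summable_suminf_not_top)
  then have summable: "summable c"
    using B by (simp add: summable_cmult_iff)
  have hyp2F1: "(\<Sum>j. c j) = hyp2F1 (m/2) ((m+1)/2) (p + 3/2) (u\<^sup>2)"
    by (simp add: hyp2F1_def c_def)
  have "(\<integral>\<^sup>+t\<in>{-1<..<1}. ennreal ((1 - t\<^sup>2) powr p * (1 - u * t) powr (-m)) \<partial>lborel)
      = ennreal (Beta (1/2) (p + 1) * hyp2F1 (m/2) ((m+1)/2) (p + 3/2) (u\<^sup>2))"
    using series c_nonneg summable
    by (simp add: suminf_ennreal2 summable_mult suminf_mult flip: hyp2F1)
  moreover have "0 \<le> hyp2F1 (m/2) ((m+1)/2) (p + 3/2) (u\<^sup>2)"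
    unfolding hyp2F1[symmetric] using summable c_nonneg B
    by (intro suminf_nonneg) (auto simp: zero_le_mult_iff)
  ultimately show ?thesis
    using B by (intro has_integral_of_set_nn_integral) auto
qed

lemma hyp2F1_euler_nonneg:
  fixes m p u :: real
  assumes "0 < m" "-1 < p" "\<bar>u\<bar> < 1"
  shows "0 \<le> hyp2F1 (m/2) ((m+1)/2) (p + 3/2) (u\<^sup>2)"
proof -
  have "0 \<le> Beta (1/2) (p + 1) * hyp2F1 (m/2) ((m+1)/2) (p + 3/2) (u\<^sup>2)"
    by (rule has_integral_nonneg[OF has_integral_euler_hyp2F1[OF assms]]) simp
  moreover have "0 < Beta (1/2) (p + 1)"
    using assms by (intro Beta_real_pos) simp_all
  ultimately show ?thesis
    by (simp add: zero_le_mult_iff)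
qed

section \<open>Integrals over the unit disk\<close>

definition disk_weight :: "real \<Rightarrow> real \<times> real \<Rightarrow> real" where
  "disk_weight p z = (if (fst z)\<^sup>2 + (snd z)\<^sup>2 < 1 then (1 - (fst z)\<^sup>2 - (snd z)\<^sup>2) powr p else 0)"

lemma disk_weight_nonneg: "0 \<le> disk_weight p z"
  by (simp add: disk_weight_def)

lemma borel_measurable_disk_weight [measurable]: "disk_weight p \<in> borel_measurable (lborel \<Otimes>\<^sub>M lborel)"
  unfolding disk_weight_def by measurable

lemma disk_weight_rotation:
  assumes "c\<^sup>2 + s\<^sup>2 = 1"
  shows "disk_weight p (x * c - y * s, x * s + y * c) = disk_weight p (x, y)"
proof -
  have "(x * c - y * s)\<^sup>2 + (x * s + y * c)\<^sup>2 = (x\<^sup>2 + y\<^sup>2) * (c\<^sup>2 + s\<^sup>2)"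
    by (simp add: power2_eq_square algebra_simps)
  with assms show ?thesis
    by (simp add: disk_weight_def diff_diff_eq)
qed

lemma disk_weight_eq_0:
  assumes "\<not> (-1 < x \<and> x < 1)"
  shows "disk_weight p (x, y) = 0"
proof -
  have "\<not> x\<^sup>2 < 1"
    using assms by (auto simp: abs_square_less_1)
  then have "\<not> x\<^sup>2 + y\<^sup>2 < 1"
    using zero_le_power2[of y] by linarith
  then show ?thesis
    by (simp add: disk_weight_def)
qed

lemma nn_integral_disk_weight_chord:
  fixes g :: "real \<Rightarrow> ennreal"
  assumes [measurable]: "g \<in> borel_measurable borel" and x: "-1 < x" "x < 1"
  shows "(\<integral>\<^sup>+y. ennreal (disk_weight p (x, y)) * g y \<partial>lborel)
       = ennreal ((1 - x\<^sup>2) powr (p + 1/2))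
         * (\<integral>\<^sup>+t\<in>{-1<..<1}. ennreal ((1 - t\<^sup>2) powr p) * g (sqrt (1 - x\<^sup>2) * t) \<partial>lborel)"
proof -
  define r where "r = sqrt (1 - x\<^sup>2)"
  have x2: "x\<^sup>2 < 1"
    using x by (simp add: abs_square_less_1)
  then have r: "0 < r" "r\<^sup>2 = 1 - x\<^sup>2"
    by (simp_all add: r_def)
  have chord: "disk_weight p (x, r * t) = indicator {-1<..<1} t * ((r\<^sup>2) powr p * (1 - t\<^sup>2) powr p)" for t
  proof -
    have "x\<^sup>2 + (r * t)\<^sup>2 < 1 \<longleftrightarrow> r\<^sup>2 * t\<^sup>2 < r\<^sup>2 * 1"
      using r(2) by (auto simp: power_mult_distrib)
    also have "\<dots> \<longleftrightarrow> t\<^sup>2 < 1"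
      using r(1) by (intro mult_less_cancel_left_pos) simp
    moreover have "1 - x\<^sup>2 - (r * t)\<^sup>2 = r\<^sup>2 * (1 - t\<^sup>2)"
      using r by (simp add: power_mult_distrib algebra_simps)
    ultimately show ?thesis
      using r by (auto simp: disk_weight_def abs_square_less_1 abs_less_iff powr_mult indicator_def)
  qed
  have "(\<integral>\<^sup>+y. ennreal (disk_weight p (x, y)) * g y \<partial>lborel)
      = ennreal r * (\<integral>\<^sup>+t. ennreal (disk_weight p (x, r * t)) * g (r * t) \<partial>lborel)"
    using nn_integral_real_affine[of "\<lambda>y. ennreal (disk_weight p (x, y)) * g y" r 0] r by simp
  also have "(\<integral>\<^sup>+t. ennreal (disk_weight p (x, r * t)) * g (r * t) \<partial>lborel)
      = ennreal ((r\<^sup>2) powr p) * (\<integral>\<^sup>+t\<in>{-1<..<1}. ennreal ((1 - t\<^sup>2) powr p) * g (r * t) \<partial>lborel)"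
    by (subst nn_integral_cmult[symmetric])
       (auto intro!: nn_integral_cong simp: chord ennreal_mult indicator_def mult.assoc)
  also have "ennreal r * (ennreal ((r\<^sup>2) powr p) * (\<integral>\<^sup>+t\<in>{-1<..<1}. ennreal ((1 - t\<^sup>2) powr p) * g (r * t) \<partial>lborel))
      = ennreal (r * (r\<^sup>2) powr p) * (\<integral>\<^sup>+t\<in>{-1<..<1}. ennreal ((1 - t\<^sup>2) powr p) * g (r * t) \<partial>lborel)"
    using r by (simp add: ennreal_mult mult.assoc)
  also have "r * (r\<^sup>2) powr p = (1 - x\<^sup>2) powr (p + 1/2)"
    using r x2 by (simp add: powr_add powr_half_sqrt r_def)
  finally show ?thesis
    by (simp add: r_def)
qed

lemma nn_integral_disk_weight_even_power:
  fixes f :: "real \<Rightarrow> ennreal" and p :: real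
  assumes p: "-1 < p" and [measurable]: "f \<in> borel_measurable borel"
  shows "(\<integral>\<^sup>+z. ennreal (disk_weight p z * (snd z)^(2*j)) * f (fst z) \<partial>(lborel \<Otimes>\<^sub>M lborel))
       = ennreal (Beta (real j + 1/2) (p + 1))
         * (\<integral>\<^sup>+x\<in>{-1<..<1}. ennreal ((1 - x\<^sup>2) powr (p + 1/2 + real j)) * f x \<partial>lborel)"
proof -
  have slice: "(\<integral>\<^sup>+y. ennreal (disk_weight p (x, y) * y^(2*j)) * f x \<partial>lborel)
      = ennreal (Beta (real j + 1/2) (p + 1)) * (ennreal ((1 - x\<^sup>2) powr (p + 1/2 + real j)) * f x * indicator {-1<..<1} x)"
    for x
  proof (cases "-1 < x \<and> x < 1")
    case True
    define r where "r = sqrt (1 - x\<^sup>2)"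
    have x2: "0 < 1 - x\<^sup>2"
      using True by (simp add: abs_square_less_1 abs_less_iff)
    have "(\<integral>\<^sup>+y. ennreal (disk_weight p (x, y)) * ennreal (y^(2*j)) \<partial>lborel)
        = ennreal ((1 - x\<^sup>2) powr (p + 1/2))
          * (\<integral>\<^sup>+t\<in>{-1<..<1}. ennreal ((1 - t\<^sup>2) powr p) * ennreal ((r * t)^(2*j)) \<partial>lborel)"
      using True by (simp add: nn_integral_disk_weight_chord r_def)
    also have "(\<integral>\<^sup>+t\<in>{-1<..<1}. ennreal ((1 - t\<^sup>2) powr p) * ennreal ((r * t)^(2*j)) \<partial>lborel)
        = ennreal (r^(2*j)) * ennreal (Beta (real j + 1/2) (p + 1))"
      unfolding nn_integral_even_moment[OF p, symmetric] using x2
      by (subst nn_integral_cmult[symmetric])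
         (auto intro!: nn_integral_cong simp: ennreal_mult'[symmetric] power_mult_distrib mult_ac r_def)
    also have "r^(2*j) = (1 - x\<^sup>2) powr real j"
      using x2 by (simp add: r_def power_mult powr_realpow)
    finally have "(\<integral>\<^sup>+y. ennreal (disk_weight p (x, y) * y^(2*j)) \<partial>lborel)
        = ennreal (Beta (real j + 1/2) (p + 1)) * ennreal ((1 - x\<^sup>2) powr (p + 1/2 + real j))"
      using x2 by (simp add: ennreal_mult' disk_weight_nonneg powr_add mult_ac)
    with True show ?thesis
      by (simp add: nn_integral_cmult mult_ac)
  qed (simp add: disk_weight_eq_0)
  have "(\<integral>\<^sup>+z. ennreal (disk_weight p z * (snd z)^(2*j)) * f (fst z) \<partial>(lborel \<Otimes>\<^sub>M lborel))
      = (\<integral>\<^sup>+x. \<integral>\<^sup>+y. ennreal (disk_weight p (x, y) * y^(2*j)) * f x \<partial>lborel \<partial>lborel)"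
    by (subst lborel.nn_integral_fst[symmetric]) simp_all
  then show ?thesis
    by (simp add: slice nn_integral_cmult)
qed

lemma nn_integral_disk_weight_rotated_kernel:
  fixes K :: "real \<Rightarrow> real" and c s p :: real
  assumes [measurable]: "K \<in> borel_measurable borel" and K: "\<And>v. 0 \<le> K v" and cs: "c\<^sup>2 + s\<^sup>2 = 1"
  shows "(\<integral>\<^sup>+z. ennreal (disk_weight p z * (fst z)\<^sup>2 * K (fst z * c + snd z * s)) \<partial>(lborel \<Otimes>\<^sub>M lborel))
       = ennreal (c\<^sup>2) * (\<integral>\<^sup>+z. ennreal (disk_weight p z * K (fst z) * (fst z)\<^sup>2) \<partial>(lborel \<Otimes>\<^sub>M lborel))
         + ennreal (s\<^sup>2) * (\<integral>\<^sup>+z. ennreal (disk_weight p z * K (fst z) * (snd z)\<^sup>2) \<partial>(lborel \<Otimes>\<^sub>M lborel))"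
proof -
  define \<Phi> where "\<Phi> z = ennreal (disk_weight p z * (fst z)\<^sup>2 * K (fst z * c + snd z * s))" for z
  define h where "h z = ennreal (disk_weight p z * K (fst z))" for z
  have [measurable]: "h \<in> borel_measurable (lborel \<Otimes>\<^sub>M lborel)"
    unfolding h_def by measurable
  have "(x * c - y * s) * c + (x * s + y * c) * s = x * (c\<^sup>2 + s\<^sup>2)" for x y :: real
    by (simp add: power2_eq_square algebra_simps)
  then have rotated: "(x * c - y * s) * c + (x * s + y * c) * s = x" for x y :: real
    using cs by simp
  have rotate: "\<Phi> (fst z * c - snd z * s, fst z * s + snd z * c) = h z * ennreal ((fst z * c + snd z * (- s))\<^sup>2)" for z
    unfolding \<Phi>_def fst_conv snd_conv disk_weight_rotation[OF cs] surjective_pairing[symmetric] rotated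
    by (simp add: h_def K ennreal_mult'[symmetric] disk_weight_nonneg mult_ac)
  have "(\<integral>\<^sup>+z. \<Phi> z \<partial>(lborel \<Otimes>\<^sub>M lborel))
      = (\<integral>\<^sup>+z. \<Phi> (fst z * c - snd z * s, fst z * s + snd z * c) \<partial>(lborel \<Otimes>\<^sub>M lborel))"
    by (rule nn_integral_lborel_pair_rotation[OF _ cs, symmetric]) (simp add: \<Phi>_def)
  also have "\<dots> = (\<integral>\<^sup>+z. h z * ennreal ((fst z * c + snd z * (- s))\<^sup>2) \<partial>(lborel \<Otimes>\<^sub>M lborel))"
    by (simp only: rotate)
  also have "\<dots> = ennreal (c\<^sup>2) * (\<integral>\<^sup>+z. h z * ennreal ((fst z)\<^sup>2) \<partial>(lborel \<Otimes>\<^sub>M lborel))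
      + ennreal (s\<^sup>2) * (\<integral>\<^sup>+z. h z * ennreal ((snd z)\<^sup>2) \<partial>(lborel \<Otimes>\<^sub>M lborel))"
    by (subst nn_integral_lborel_pair_square_linear_form) (simp_all add: h_def disk_weight_def)
  finally show ?thesis
    by (simp add: \<Phi>_def h_def K ennreal_mult'[symmetric] disk_weight_nonneg)
qed

section \<open>The Poisson kernel on the disk\<close>

text \<open>By Cauchy--Schwarz, \<open>x c + sqrt (1 - x\<^sup>2) \<bar>s\<bar> \<le> 1\<close>, with equality only at \<open>x = c\<close>.\<close>
lemma poisson_chord_bound:
  fixes \<rho> c s x :: real
  assumes \<rho>: "0 \<le> \<rho>" "\<rho> \<le> 1" and cs: "c\<^sup>2 + s\<^sup>2 = 1" and x: "-1 < x" "x < 1"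
    and ne: "\<rho> < 1 \<or> x \<noteq> c"
  shows "2 * \<rho> * \<bar>s\<bar> * sqrt (1 - x\<^sup>2) < 1 + \<rho>\<^sup>2 - 2 * \<rho> * x * c"
proof -
  define r where "r = sqrt (1 - x\<^sup>2)"
  define a where "a = \<bar>s\<bar>"
  have "r\<^sup>2 = 1 - x\<^sup>2" "a\<^sup>2 = s\<^sup>2"
    using x by (simp_all add: r_def a_def abs_square_le_1)
  then have sq: "(x - c)\<^sup>2 + (r - a)\<^sup>2 = 2 - 2 * (x * c + r * a)"
    using cs by (simp add: power2_diff algebra_simps)
  have gap: "1 + \<rho>\<^sup>2 - 2 * \<rho> * x * c - 2 * \<rho> * a * r = (1 - \<rho>)\<^sup>2 + 2 * \<rho> * (1 - (x * c + r * a))"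
    by (simp add: power2_diff algebra_simps)
  have le: "x * c + r * a \<le> 1"
    using sq zero_le_power2[of "x - c"] zero_le_power2[of "r - a"] by (smt (verit))
  have "2 * \<rho> * a * r < 1 + \<rho>\<^sup>2 - 2 * \<rho> * x * c"
  proof (cases "\<rho> < 1")
    case True
    then have "0 < (1 - \<rho>)\<^sup>2"
      by simp
    moreover have "0 \<le> 2 * \<rho> * (1 - (x * c + r * a))"
      using \<rho> le by simp
    ultimately show ?thesis
      using gap by linarith
  next
    case False
    with \<rho> ne have "\<rho> = 1" "0 < (x - c)\<^sup>2"
      by auto
    then have "x * c + r * a < 1"
      using sq zero_le_power2[of "r - a"] by (smt (verit))
    then show ?thesis
      using \<open>\<rho> = 1\<close> by (simp add: algebra_simps)
  qed
  then show ?thesis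
    by (simp add: r_def a_def)
qed

lemma poisson_chord_parameter:
  fixes \<rho> c s x :: real
  assumes \<rho>: "0 \<le> \<rho>" "\<rho> \<le> 1" and cs: "c\<^sup>2 + s\<^sup>2 = 1" and x: "-1 < x" "x < 1"
    and ne: "\<rho> < 1 \<or> x \<noteq> c"
  shows "0 < 1 + \<rho>\<^sup>2 - 2 * \<rho> * x * c"
    and "\<bar>2 * \<rho> * s * sqrt (1 - x\<^sup>2) / (1 + \<rho>\<^sup>2 - 2 * \<rho> * x * c)\<bar> < 1"
proof -
  have x2: "x\<^sup>2 \<le> 1"
    using x by (simp add: abs_square_le_1)
  then have "0 \<le> 2 * \<rho> * \<bar>s\<bar> * sqrt (1 - x\<^sup>2)"
    using \<rho> by simp
  moreover note bound = poisson_chord_bound[OF \<rho> cs x ne]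
  ultimately show D: "0 < 1 + \<rho>\<^sup>2 - 2 * \<rho> * x * c"
    by linarith
  show "\<bar>2 * \<rho> * s * sqrt (1 - x\<^sup>2) / (1 + \<rho>\<^sup>2 - 2 * \<rho> * x * c)\<bar> < 1"
    using bound D \<rho> x2 by (simp add: abs_mult)
qed

lemma hyp2F1_poisson_nonneg:
  fixes m \<rho> c s x :: real
  assumes m: "0 < m" and \<rho>: "0 \<le> \<rho>" "\<rho> \<le> 1" and cs: "c\<^sup>2 + s\<^sup>2 = 1"
    and x: "-1 < x" "x < 1" and ne: "\<rho> < 1 \<or> x \<noteq> c"
  shows "0 \<le> hyp2F1 (m/2) ((m+1)/2) (m + 1/2) (4 * \<rho>\<^sup>2 * s\<^sup>2 * (1 - x\<^sup>2) / (1 + \<rho>\<^sup>2 - 2 * \<rho> * x * c)\<^sup>2)"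
proof -
  define u where "u = 2 * \<rho> * s * sqrt (1 - x\<^sup>2) / (1 + \<rho>\<^sup>2 - 2 * \<rho> * x * c)"
  have "u\<^sup>2 = 4 * \<rho>\<^sup>2 * s\<^sup>2 * (1 - x\<^sup>2) / (1 + \<rho>\<^sup>2 - 2 * \<rho> * x * c)\<^sup>2"
    using x by (simp add: u_def power_divide power_mult_distrib abs_square_le_1)
  then show ?thesis
    using hyp2F1_euler_nonneg[OF m, of "m - 1" u] poisson_chord_parameter(2)[OF \<rho> cs x ne] m
    by (simp add: u_def add.commute)
qed

lemma nn_integral_disk_weight_poisson_chord:
  fixes m \<rho> c s x :: real
  assumes m: "0 < m" and \<rho>: "0 \<le> \<rho>" "\<rho> \<le> 1" and cs: "c\<^sup>2 + s\<^sup>2 = 1"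
    and x: "-1 < x" "x < 1" and ne: "\<rho> < 1 \<or> x \<noteq> c"
  shows "(\<integral>\<^sup>+y. ennreal (disk_weight (m - 1) (x, y) * (1 - 2 * \<rho> * (x * c + y * s) + \<rho>\<^sup>2) powr (-m)) \<partial>lborel)
       = ennreal (Beta (1/2) m * (1 - x\<^sup>2) powr (m - 1/2) / (1 + \<rho>\<^sup>2 - 2 * \<rho> * x * c) powr m
           * hyp2F1 (m/2) ((m+1)/2) (m + 1/2) (4 * \<rho>\<^sup>2 * s\<^sup>2 * (1 - x\<^sup>2) / (1 + \<rho>\<^sup>2 - 2 * \<rho> * x * c)\<^sup>2))"
proof -
  define r where "r = sqrt (1 - x\<^sup>2)"
  define D where "D = 1 + \<rho>\<^sup>2 - 2 * \<rho> * x * c"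
  define u where "u = 2 * \<rho> * s * r / D"
  have x2: "0 < 1 - x\<^sup>2"
    using x by (simp add: abs_square_less_1 abs_less_iff)
  have D: "0 < D" and u: "\<bar>u\<bar> < 1"
    using poisson_chord_parameter[OF \<rho> cs x ne] by (simp_all add: u_def r_def D_def)
  have kernel: "1 - 2 * \<rho> * (x * c + r * t * s) + \<rho>\<^sup>2 = D * (1 - u * t)" for t
    using D by (simp add: u_def D_def field_simps)
  have "(\<integral>\<^sup>+t\<in>{-1<..<1}. ennreal ((1 - t\<^sup>2) powr (m - 1)) * ennreal ((1 - 2 * \<rho> * (x * c + r * t * s) + \<rho>\<^sup>2) powr (-m)) \<partial>lborel)
      = (\<integral>\<^sup>+t. ennreal (D powr (-m)) * (ennreal ((1 - t\<^sup>2) powr (m - 1) * (1 - u * t) powr (-m)) * indicator {-1<..<1} t) \<partial>lborel)"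
  proof (rule nn_integral_cong)
    fix t :: real
    have "0 < 1 - u * t" if "-1 < t" "t < 1"
    proof -
      have "\<bar>u\<bar> * \<bar>t\<bar> \<le> \<bar>u\<bar>"
        using that by (simp add: mult_right_le_one_le)
      then show ?thesis
        using u abs_ge_self[of "u * t"] abs_mult[of u t] by linarith
    qed
    then show "ennreal ((1 - t\<^sup>2) powr (m - 1)) * ennreal ((1 - 2 * \<rho> * (x * c + r * t * s) + \<rho>\<^sup>2) powr (-m)) * indicator {-1<..<1} t
        = ennreal (D powr (-m)) * (ennreal ((1 - t\<^sup>2) powr (m - 1) * (1 - u * t) powr (-m)) * indicator {-1<..<1} t)"
      using D unfolding kernel by (auto simp: powr_mult ennreal_mult'[symmetric] indicator_def mult_ac)
  qed
  also have "\<dots> = ennreal (D powr (-m)) * ennreal (Beta (1/2) m * hyp2F1 (m/2) ((m+1)/2) (m + 1/2) (u\<^sup>2))"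
    using nn_integral_has_integral_lebesgue'[OF _ has_integral_euler_hyp2F1[OF m _ u, of "m - 1"]] m
    by (simp add: nn_integral_cmult add.commute)
  finally have "(\<integral>\<^sup>+y. ennreal (disk_weight (m - 1) (x, y)) * ennreal ((1 - 2 * \<rho> * (x * c + y * s) + \<rho>\<^sup>2) powr (-m)) \<partial>lborel)
      = ennreal ((1 - x\<^sup>2) powr (m - 1/2)) * (ennreal (D powr (-m)) * ennreal (Beta (1/2) m * hyp2F1 (m/2) ((m+1)/2) (m + 1/2) (u\<^sup>2)))"
    using nn_integral_disk_weight_chord[OF _ x, of "\<lambda>y. ennreal ((1 - 2 * \<rho> * (x * c + y * s) + \<rho>\<^sup>2) powr (-m))" "m - 1"]
    by (simp add: r_def mult_ac)
  moreover have "u\<^sup>2 = 4 * \<rho>\<^sup>2 * s\<^sup>2 * (1 - x\<^sup>2) / D\<^sup>2"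
    using x2 by (simp add: u_def r_def power_divide power_mult_distrib)
  ultimately show ?thesis
    using D by (simp add: ennreal_mult'[symmetric] disk_weight_nonneg powr_minus_divide D_def mult_ac)
qed

lemma nn_integral_disk_weight_poisson:
  fixes m \<rho> c s :: real
  assumes m: "0 < m" and \<rho>: "0 \<le> \<rho>" "\<rho> \<le> 1" and cs: "c\<^sup>2 + s\<^sup>2 = 1"
  shows "(\<integral>\<^sup>+z. ennreal (disk_weight (m - 1) z * (fst z)\<^sup>2 * (1 - 2 * \<rho> * (fst z * c + snd z * s) + \<rho>\<^sup>2) powr (-m))
            \<partial>(lborel \<Otimes>\<^sub>M lborel))
       = ennreal (Beta (1/2) m) * (\<integral>\<^sup>+x\<in>{-1<..<1}. ennreal (x\<^sup>2 * (1 - x\<^sup>2) powr (m - 1/2)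
            / (1 + \<rho>\<^sup>2 - 2 * \<rho> * x * c) powr m
            * hyp2F1 (m/2) ((m+1)/2) (m + 1/2) (4 * \<rho>\<^sup>2 * s\<^sup>2 * (1 - x\<^sup>2) / (1 + \<rho>\<^sup>2 - 2 * \<rho> * x * c)\<^sup>2)) \<partial>lborel)"
    (is "?L = ennreal ?B * (\<integral>\<^sup>+x\<in>_. ennreal (?F x) \<partial>lborel)")
proof -
  have "?L = (\<integral>\<^sup>+x. \<integral>\<^sup>+y. ennreal (disk_weight (m - 1) (x, y) * x\<^sup>2 * (1 - 2 * \<rho> * (x * c + y * s) + \<rho>\<^sup>2) powr (-m))
      \<partial>lborel \<partial>lborel)"
    by (subst lborel.nn_integral_fst[symmetric]) simp_all
  also have "\<dots> = (\<integral>\<^sup>+x. ennreal ?B * (ennreal (?F x) * indicator {-1<..<1} x) \<partial>lborel)"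
  proof (rule nn_integral_cong_AE)
    show "AE x in lborel. (\<integral>\<^sup>+y. ennreal (disk_weight (m - 1) (x, y) * x\<^sup>2 * (1 - 2 * \<rho> * (x * c + y * s) + \<rho>\<^sup>2) powr (-m)) \<partial>lborel)
        = ennreal ?B * (ennreal (?F x) * indicator {-1<..<1} x)"
      \<comment> \<open>for \<open>\<rho> = 1\<close> and \<open>x = c\<close> the argument of \<open>hyp2F1\<close> is \<open>1\<close>, where the series diverges\<close>
      using AE_lborel_singleton[of c]
    proof eventually_elim
      case (elim x)
      show ?case
      proof (cases "-1 < x \<and> x < 1")
        case True
        have "(\<integral>\<^sup>+y. ennreal (disk_weight (m - 1) (x, y) * x\<^sup>2 * (1 - 2 * \<rho> * (x * c + y * s) + \<rho>\<^sup>2) powr (-m)) \<partial>lborel)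
            = ennreal (x\<^sup>2) * (\<integral>\<^sup>+y. ennreal (disk_weight (m - 1) (x, y) * (1 - 2 * \<rho> * (x * c + y * s) + \<rho>\<^sup>2) powr (-m)) \<partial>lborel)"
          by (subst nn_integral_cmult[symmetric]) (simp_all add: ennreal_mult'[symmetric] mult_ac)
        also have "\<dots> = ennreal ?B * ennreal (?F x)"
          using True elim Beta_real_pos[of "1/2" m] m
          by (subst nn_integral_disk_weight_poisson_chord[OF m \<rho> cs])
             (auto simp: ennreal_mult'[symmetric] mult_ac)
        finally show ?thesis
          using True by simp
      qed (simp add: disk_weight_eq_0)
    qed
  qed
  also have "\<dots> = ennreal ?B * (\<integral>\<^sup>+x\<in>{-1<..<1}. ennreal (?F x) \<partial>lborel)"
    by (rule nn_integral_cmult) simp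
  finally show ?thesis .
qed

lemma poisson_weight_bound:
  fixes m q \<rho> x :: real
  assumes m: "0 \<le> m" and q: "m - 1/2 \<le> q" and \<rho>: "0 \<le> \<rho>" "\<rho> \<le> 1" and x: "-1 < x" "x < 1"
  shows "x^(2*j) * (1 - x\<^sup>2) powr q * (1 - 2 * \<rho> * x + \<rho>\<^sup>2) powr (-m) \<le> 4 powr m * (1 - x\<^sup>2) powr (-1/2)"
proof -
  define b where "b = 1 - 2 * \<rho> * x + \<rho>\<^sup>2"
  have x2: "0 < 1 - x\<^sup>2" "1 - x\<^sup>2 \<le> 1"
    using x by (simp_all add: abs_square_less_1 abs_less_iff)
  have "2 * b - (1 - x) = (1 + x) * (1 - \<rho>)\<^sup>2 + (1 - x) * (\<rho>\<^sup>2 + 2 * \<rho>)"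
    by (simp add: b_def power2_eq_square algebra_simps)
  also have "\<dots> \<ge> 0"
    using x \<rho> by simp
  finally have b: "(1 - x) / 2 \<le> b"
    by simp
  have "x^(2*j) \<le> 1"
    using x2 by (simp add: power_mult power_le_one)
  moreover have "(1 - x\<^sup>2) powr q \<le> (1 - x\<^sup>2) powr (m - 1/2)"
    using x2 q by (intro powr_mono') auto
  moreover have "0 \<le> x^(2*j)"
    by (simp add: power_mult)
  ultimately have "x^(2*j) * (1 - x\<^sup>2) powr q \<le> (1 - x\<^sup>2) powr (m - 1/2)"
    using mult_left_le_one_le[of "(1 - x\<^sup>2) powr q" "x^(2*j)"] by simp
  then have "x^(2*j) * (1 - x\<^sup>2) powr q * b powr (-m) \<le> (1 - x\<^sup>2) powr (m - 1/2) * b powr (-m)"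
    by (rule mult_right_mono) simp
  also have "\<dots> = (1 - x\<^sup>2) powr m * b powr (-m) * (1 - x\<^sup>2) powr (-1/2)"
    using x2 by (simp add: powr_add [symmetric])
  also have "\<dots> \<le> (1 - x\<^sup>2) powr m * ((1 - x) / 2) powr (-m) * (1 - x\<^sup>2) powr (-1/2)"
    using b x m by (intro mult_right_mono mult_left_mono powr_mono2') auto
  also have "\<dots> = (2 * (1 + x)) powr m * (1 - x\<^sup>2) powr (-1/2)"
  proof -
    have "(1 - x\<^sup>2) powr m * ((1 - x) / 2) powr (-m) = (1 - x\<^sup>2) powr m / ((1 - x) / 2) powr m"
      by (simp add: powr_minus_divide)
    also have "\<dots> = ((1 - x\<^sup>2) / ((1 - x) / 2)) powr m"
      using x2 x by (intro powr_divide [symmetric])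
    also have "(1 - x\<^sup>2) / ((1 - x) / 2) = 2 * (1 + x)"
      using x by (simp add: field_simps power2_eq_square)
    finally show ?thesis
      by simp
  qed
  also have "\<dots> \<le> 4 powr m * (1 - x\<^sup>2) powr (-1/2)"
    using x m by (intro mult_right_mono powr_mono2) auto
  finally show ?thesis
    by (simp add: b_def)
qed

lemma nn_integral_poisson_weight_finite:
  fixes m q \<rho> :: real
  assumes m: "0 \<le> m" and q: "m - 1/2 \<le> q" and \<rho>: "0 \<le> \<rho>" "\<rho> \<le> 1"
  shows "(\<integral>\<^sup>+x\<in>{-1<..<1}. ennreal (x^(2*j) * (1 - x\<^sup>2) powr q * (1 - 2 * \<rho> * x + \<rho>\<^sup>2) powr (-m)) \<partial>lborel) < \<infinity>"
proof -
  have "(\<integral>\<^sup>+x\<in>{-1<..<1}. ennreal (x^(2*j) * (1 - x\<^sup>2) powr q * (1 - 2 * \<rho> * x + \<rho>\<^sup>2) powr (-m)) \<partial>lborel)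
      \<le> (\<integral>\<^sup>+x. ennreal (4 powr m) * (ennreal (x^(2*0) * (1 - x\<^sup>2) powr (-1/2)) * indicator {-1<..<1} x) \<partial>lborel)"
    using poisson_weight_bound[OF m q \<rho>]
    by (intro nn_integral_mono) (auto simp: ennreal_mult'[symmetric] ennreal_leI indicator_def)
  also have "\<dots> < \<infinity>"
    using nn_integral_even_moment[of "-1/2" 0] by (simp add: nn_integral_cmult ennreal_mult_less_top)
  finally show ?thesis .
qed

lemma nn_integral_hyp2F1_poisson_identity:
  fixes m \<rho> c s :: real
  assumes m: "0 < m" and \<rho>: "0 \<le> \<rho>" "\<rho> \<le> 1" and cs: "c\<^sup>2 + s\<^sup>2 = 1"
  shows "(\<integral>\<^sup>+x\<in>{-1<..<1}. ennreal (x\<^sup>2 * (1 - x\<^sup>2) powr (m - 1/2) / (1 + \<rho>\<^sup>2 - 2 * \<rho> * x * c) powr m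
            * hyp2F1 (m/2) ((m+1)/2) (m + 1/2) (4 * \<rho>\<^sup>2 * s\<^sup>2 * (1 - x\<^sup>2) / (1 + \<rho>\<^sup>2 - 2 * \<rho> * x * c)\<^sup>2)) \<partial>lborel)
       = ennreal (s\<^sup>2 / (2 * m + 1))
           * (\<integral>\<^sup>+x\<in>{-1<..<1}. ennreal ((1 - x\<^sup>2) powr (m + 1/2) * (1 - 2 * \<rho> * x + \<rho>\<^sup>2) powr (-m)) \<partial>lborel)
         + ennreal (c\<^sup>2)
           * (\<integral>\<^sup>+x\<in>{-1<..<1}. ennreal (x\<^sup>2 * (1 - x\<^sup>2) powr (m - 1/2) * (1 - 2 * \<rho> * x + \<rho>\<^sup>2) powr (-m)) \<partial>lborel)"
    (is "?L = ennreal (s\<^sup>2 / (2 * m + 1)) * ?R1 + ennreal (c\<^sup>2) * ?R2")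
proof -
  define K where "K v = (1 - 2 * \<rho> * v + \<rho>\<^sup>2) powr (-m)" for v :: real
  define B where "B = Beta (1/2) m"
  have B: "0 < B"
    using m by (simp add: B_def Beta_real_pos)
  have [measurable]: "K \<in> borel_measurable borel"
    unfolding K_def by measurable
  have "ennreal B * ?L
      = (\<integral>\<^sup>+z. ennreal (disk_weight (m - 1) z * (fst z)\<^sup>2 * K (fst z * c + snd z * s)) \<partial>(lborel \<Otimes>\<^sub>M lborel))"
    using nn_integral_disk_weight_poisson[OF m \<rho> cs] by (simp add: B_def K_def)
  also have "\<dots> = ennreal (c\<^sup>2) * (\<integral>\<^sup>+z. ennreal (disk_weight (m - 1) z * K (fst z) * (fst z)\<^sup>2) \<partial>(lborel \<Otimes>\<^sub>M lborel))
      + ennreal (s\<^sup>2) * (\<integral>\<^sup>+z. ennreal (disk_weight (m - 1) z * K (fst z) * (snd z)\<^sup>2) \<partial>(lborel \<Otimes>\<^sub>M lborel))"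
    by (rule nn_integral_disk_weight_rotated_kernel[OF _ _ cs]) (simp_all add: K_def)
  also have "(\<integral>\<^sup>+z. ennreal (disk_weight (m - 1) z * K (fst z) * (fst z)\<^sup>2) \<partial>(lborel \<Otimes>\<^sub>M lborel)) = ennreal B * ?R2"
    using nn_integral_disk_weight_even_power[of "m - 1" "\<lambda>x. ennreal (K x * x\<^sup>2)" 0] m
    by (simp add: B_def K_def ennreal_mult'[symmetric] disk_weight_nonneg mult_ac)
  also have "(\<integral>\<^sup>+z. ennreal (disk_weight (m - 1) z * K (fst z) * (snd z)\<^sup>2) \<partial>(lborel \<Otimes>\<^sub>M lborel))
      = ennreal (B / (2 * m + 1)) * ?R1"
  proof -
    have "Beta (real 1 + 1/2) m = B / (2 * m + 1)"
      using Beta_nat_plus_half[OF m, of 1] by (simp add: B_def field_simps)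
    then show ?thesis
      using nn_integral_disk_weight_even_power[of "m - 1" "\<lambda>x. ennreal (K x)" 1] m
      by (simp add: K_def ennreal_mult'[symmetric] ennreal_mult''[symmetric] disk_weight_nonneg
                    mult_ac add.commute power2_eq_square)
  qed
  finally have "ennreal B * ?L
      = ennreal (c\<^sup>2) * (ennreal B * ?R2) + ennreal (s\<^sup>2) * (ennreal (B / (2 * m + 1)) * ?R1)" .
  moreover have "ennreal (s\<^sup>2) * ennreal (B / (2 * m + 1)) = ennreal B * ennreal (s\<^sup>2 / (2 * m + 1))"
    using B m by (simp add: ennreal_mult[symmetric])
  ultimately have "ennreal B * ?L = ennreal B * (ennreal (s\<^sup>2 / (2 * m + 1)) * ?R1 + ennreal (c\<^sup>2) * ?R2)"
    by (simp only: distrib_left mult.assoc[symmetric]) (simp add: ac_simps)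
  then show ?thesis
    using B by (simp add: ennreal_mult_cancel_left)
qed

lemma integral_hyp2F1_poisson_identity:
  fixes m \<rho> c s :: real
  assumes m: "0 < m" and \<rho>: "0 \<le> \<rho>" "\<rho> \<le> 1" and cs: "c\<^sup>2 + s\<^sup>2 = 1"
  shows "integral {-1..1} (\<lambda>x. x\<^sup>2 * (1 - x\<^sup>2) powr (m - 1/2) / (1 + \<rho>\<^sup>2 - 2 * \<rho> * x * c) powr m
            * hyp2F1 (m/2) ((m+1)/2) (m + 1/2) (4 * \<rho>\<^sup>2 * s\<^sup>2 * (1 - x\<^sup>2) / (1 + \<rho>\<^sup>2 - 2 * \<rho> * x * c)\<^sup>2))
       = s\<^sup>2 / (2 * m + 1) * integral {-1..1} (\<lambda>x. (1 - x\<^sup>2) powr (m + 1/2) * (1 - 2 * \<rho> * x + \<rho>\<^sup>2) powr (-m))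
         + c\<^sup>2 * integral {-1..1} (\<lambda>x. x\<^sup>2 * (1 - x\<^sup>2) powr (m - 1/2) * (1 - 2 * \<rho> * x + \<rho>\<^sup>2) powr (-m))"
    (is "integral _ ?F = _ * integral _ ?g1 + _ * integral _ ?g2")
proof -
  have F_nonneg: "0 \<le> ?F x" if "x \<in> {-1<..<1} - {c}" for x
    using that hyp2F1_poisson_nonneg[OF m \<rho> cs, of x] by auto
  have "integral {-1..1} ?F = integral ({-1<..<1} - {c}) ?F"
    unfolding integral_open_interval_real
    by (rule integral_spike_set; rule negligible_subset[of "{c}"]) auto
  also have "\<dots> = enn2real (\<integral>\<^sup>+x\<in>{-1<..<1} - {c}. ennreal (?F x) \<partial>lborel)"
    using F_nonneg by (intro integral_eq_enn2real_set_nn_integral) auto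
  also have "(\<integral>\<^sup>+x\<in>{-1<..<1} - {c}. ennreal (?F x) \<partial>lborel) = (\<integral>\<^sup>+x\<in>{-1<..<1}. ennreal (?F x) \<partial>lborel)"
    using AE_lborel_singleton[of c]
    by (auto intro!: nn_integral_cong_AE elim!: eventually_mono simp: indicator_def)
  finally have F: "integral {-1..1} ?F = enn2real (\<integral>\<^sup>+x\<in>{-1<..<1}. ennreal (?F x) \<partial>lborel)" .
  have g: "integral {-1..1} g = enn2real (\<integral>\<^sup>+x\<in>{-1<..<1}. ennreal (g x) \<partial>lborel)"
    if "g \<in> borel_measurable borel" "\<And>x. 0 \<le> g x" for g :: "real \<Rightarrow> real"
    unfolding integral_open_interval_real using that by (intro integral_eq_enn2real_set_nn_integral) auto
  have "(\<integral>\<^sup>+x\<in>{-1<..<1}. ennreal (?g1 x) \<partial>lborel) < \<infinity>"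
    using nn_integral_poisson_weight_finite[of m "m + 1/2" \<rho> 0] m \<rho> by simp
  moreover have "(\<integral>\<^sup>+x\<in>{-1<..<1}. ennreal (?g2 x) \<partial>lborel) < \<infinity>"
    using nn_integral_poisson_weight_finite[of m "m - 1/2" \<rho> 1] m \<rho> by simp
  ultimately show ?thesis
    using m unfolding F g[of ?g1, simplified] g[of ?g2, simplified] nn_integral_hyp2F1_poisson_identity[OF m \<rho> cs]
    by (simp add: enn2real_plus ennreal_mult_less_top enn2real_mult)
qed

theorem lemma4:
  fixes n :: nat and \<rho> \<alpha> :: real
  assumes "n \<ge> 3" and "0 \<le> \<rho>" and "\<rho> \<le> 1" and "0 \<le> \<alpha>" and "\<alpha> \<le> pi / 2"
  shows "integral {-1..1} (\<lambda>x::real.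
            x\<^sup>2 * (1 - x\<^sup>2) powr ((real n - 3) / 2)
            / (1 + \<rho>\<^sup>2 - 2 * \<rho> * x * cos \<alpha>) powr (real n / 2 - 1)
            * hyp2F1 ((real n - 2) / 4) (real n / 4) ((real n - 1) / 2)
                (4 * \<rho>\<^sup>2 * (sin \<alpha>)\<^sup>2 * (1 - x\<^sup>2) / (1 + \<rho>\<^sup>2 - 2 * \<rho> * x * cos \<alpha>)\<^sup>2))
       = (sin \<alpha>)\<^sup>2 / (real n - 1)
           * integral {-1..1} (\<lambda>x::real. (1 - x\<^sup>2) powr ((real n - 1) / 2)
                                 * (1 - 2 * \<rho> * x + \<rho>\<^sup>2) powr (1 - real n / 2))
         + (cos \<alpha>)\<^sup>2
           * integral {-1..1} (\<lambda>x::real. x\<^sup>2 * (1 - x\<^sup>2) powr ((real n - 3) / 2)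
                                 * (1 - 2 * \<rho> * x + \<rho>\<^sup>2) powr (1 - real n / 2))"
proof -
  define m where "m = real n / 2 - 1"
  have m: "0 < m"
    using assms(1) by (simp add: m_def)
  have exponents: "(real n - 3) / 2 = m - 1/2" "real n / 2 - 1 = m" "1 - real n / 2 = - m"
      "(real n - 2) / 4 = m / 2" "real n / 4 = (m + 1) / 2" "(real n - 1) / 2 = m + 1/2"
      and dimension: "real n - 1 = 2 * m + 1"
    by (simp_all add: m_def field_simps)
  have "(cos \<alpha>)\<^sup>2 + (sin \<alpha>)\<^sup>2 = 1"
    by simp
  then show ?thesis
    unfolding exponents using integral_hyp2F1_poisson_identity[OF m assms(2,3)] by (simp only: dimension)
qed

end
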